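(* Let $A\subseteq\Delta^{m-1}\times\Delta^{n-1}$ and let $\mathscr T$ be a triangulation of $A$. Let $i,j,k,l\in[m]$ be distinct, and for each unordered pair $\alpha=(ab)$ of distinct elements of $\{i,j,k,l\}$ let $f_\alpha\in\Delta^{n-1}$, these six elements being pairwise distinct, and assume all points of the circuits below lie in $A$. Suppose that $\mathscr T_{jkl}^{f_{(jk)}f_{(kl)}f_{(lj)}}\subseteq\mathscr T$, $\mathscr T_{kil}^{f_{(ki)}f_{(il)}f_{(lk)}}\subseteq\mathscr T$, and $X_{ijl}^{f_{(ij)}f_{(jl)}f_{(li)}}\setminus\{(e_i,f_{(ij)})\}\in\mathscr T$. Then $\mathscr T$ does not have a flip supported on the circuit $X_{ijk}^{f_{(ij)}f_{(jk)}f_{(ki)}}=\big((X_{ijk}^{f_{(ij)}f_{(jk)}f_{(ki)}})^+,(X_{ijk}^{f_{(ij)}f_{(jk)}f_{(ki)}})^-\big)$.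
   Context: General conventions. For a finite point set $A\subset\mathbb R^d$: a cell is a subset of $A$; a simplex is an affinely independent cell; a face of a cell $C$ is a subset $F\subseteq C$ which is the set of minimizers on $C$ of some linear functional. A triangulation of $A$ is a collection $\mathscr T$ of simplices of $A$, closed under taking faces, such that for all $\sigma,\sigma'\in\mathscr T$, $\mathrm{conv}(\sigma)\cap\mathrm{conv}(\sigma')=\mathrm{conv}(F)$ for a common face $F$ of $\sigma$ and $\sigma'$, and such that $\bigcup_{\sigma\in\mathscr T}\mathrm{conv}(\sigma)=\mathrm{conv}(A)$. A circuit is a minimal affinely dependent subset $X$; it satisfies an affine dependence $\sum_{x\in X}\lambda_x x=0$, $\sum\lambda_x=0$, all $\lambda_x\neq0$, unique up to scaling, which partitions $X=X^+\cup X^-$ into the points with positive and with negative coefficients; writing $X=(X^+,X^-)$ fixes a choice of sign. Set $\mathscr T_X^+:=\{\sigma\subseteq X:X^+\not\subseteq\sigma\}$ and $\mathscr T_X^-:=\{\sigma\subseteq X:X^-\not\subseteq\sigma\}$. For $C\in\mathscr T$, $\mathrm{link}_{\mathscr T}(C):=\{C'\in\mathscr T: C\cap C'=\emptyset,\ C\cup C'\in\mathscr T\}$. A triangulation $\mathscr T$ of $A$ has a flip supported on the circuit $(X^+,X^-)$, $X\subseteq A$, if $\mathscr T_X^+\subseteq\mathscr T$ and all inclusion-maximal elements of $\mathscr T_X^+$ have the same link $\mathscr L$ in $\mathscr T$. $\Delta^{m-1}\times\Delta^{n-1}:=\{(e_a,f):a\in[m],f\in\Delta^{n-1}\}\subset\mathbb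 R^m\times\mathbb R^n$, where $e_1,\dots,e_m$ and $\Delta^{n-1}$ are the standard bases of $\mathbb R^m$ and $\mathbb R^n$. For distinct $i_1,\dots,i_t\in[m]$ and distinct $f_1,\dots,f_t\in\Delta^{n-1}$, $X_{i_1\cdots i_t}^{f_1\cdots f_t}$ is the circuit with affine dependence $(e_{i_1},f_1)-(e_{i_2},f_1)+(e_{i_2},f_2)-(e_{i_3},f_2)+\dots+(e_{i_t},f_t)-(e_{i_1},f_t)=0$, with $+$ and $-$ parts read off from these signs, and $\mathscr T_{i_1\cdots i_t}^{f_1\cdots f_t}:=\mathscr T^+_{X_{i_1\cdots i_t}^{f_1\cdots f_t}}$. *)

theory Defs
  imports "HOL-Analysis.Analysis"
begin

definition is_simplex :: "'a::euclidean_space set \<Rightarrow> bool" where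
  "is_simplex \<sigma> \<longleftrightarrow> \<not> affine_dependent \<sigma>"

definition is_face :: "'a::euclidean_space set \<Rightarrow> 'a set \<Rightarrow> bool" where
  "is_face F C \<longleftrightarrow> F \<subseteq> C \<and>
     (F = {} \<or> (\<exists>u. F = {x \<in> C. \<forall>y \<in> C. u \<bullet> x \<le> u \<bullet> y}))"

definition is_triangulation :: "'a::euclidean_space set \<Rightarrow> 'a set set \<Rightarrow> bool" where
  "is_triangulation A T \<longleftrightarrow>
     (\<forall>\<sigma> \<in> T. \<sigma> \<subseteq> A \<and> is_simplex \<sigma>) \<and>
     (\<forall>\<sigma> \<in> T. \<forall>F. is_face F \<sigma> \<longrightarrow> F \<in> T) \<and>
     (\<forall>\<sigma> \<in> T. \<forall>\<sigma>' \<in> T. \<exists>F. is_face F \<sigma> \<and> is_face F \<sigma>' \<and>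
         convex hull \<sigma> \<inter> convex hull \<sigma>' = convex hull F) \<and>
     (\<Union>\<sigma> \<in> T. convex hull \<sigma>) = convex hull A"

definition T_plus :: "'a set \<Rightarrow> 'a set \<Rightarrow> 'a set set" where
  "T_plus Xp Xm = {\<sigma>. \<sigma> \<subseteq> Xp \<union> Xm \<and> \<not> Xp \<subseteq> \<sigma>}"

definition link :: "'a set set \<Rightarrow> 'a set \<Rightarrow> 'a set set" where
  "link T C = {C' \<in> T. C \<inter> C' = {} \<and> C \<union> C' \<in> T}"

definition has_flip :: "'a set set \<Rightarrow> 'a set \<Rightarrow> 'a set \<Rightarrow> bool" where
  "has_flip T Xp Xm \<longleftrightarrow> T_plus Xp Xm \<subseteq> T \<and>
     (\<exists>L. \<forall>\<sigma> \<in> T_plus Xp Xm.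
        (\<forall>\<tau> \<in> T_plus Xp Xm. \<sigma> \<subseteq> \<tau> \<longrightarrow> \<tau> = \<sigma>) \<longrightarrow> link T \<sigma> = L)"

(* The product of simplices: the point (e_a, f_b) of \<Delta>^{m-1} \<times> \<Delta>^{n-1},
   with [m] = UNIV :: 'm set and \<Delta>^{n-1} = {axis b 1 | b :: 'n} *)
definition pt :: "'m::finite \<Rightarrow> 'n::finite \<Rightarrow> (real^'m) \<times> (real^'n)" where
  "pt a b = (axis a 1, axis b 1)"

definition prod_simplices :: "((real^'m::finite) \<times> (real^'n::finite)) set" where
  "prod_simplices = {pt a b | a b. True}"

(* The circuit X_{i1 i2 i3}^{f1 f2 f3}, with dependence
   (e_i1,f1) - (e_i2,f1) + (e_i2,f2) - (e_i3,f2) + (e_i3,f3) - (e_i1,f3) = 0 *)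
definition circ3_plus :: "'m::finite \<Rightarrow> 'm \<Rightarrow> 'm \<Rightarrow> 'n::finite \<Rightarrow> 'n \<Rightarrow> 'n \<Rightarrow>
    ((real^'m) \<times> (real^'n)) set" where
  "circ3_plus i1 i2 i3 f1 f2 f3 = {pt i1 f1, pt i2 f2, pt i3 f3}"

definition circ3_minus :: "'m::finite \<Rightarrow> 'm \<Rightarrow> 'm \<Rightarrow> 'n::finite \<Rightarrow> 'n \<Rightarrow> 'n \<Rightarrow>
    ((real^'m) \<times> (real^'n)) set" where
  "circ3_minus i1 i2 i3 f1 f2 f3 = {pt i2 f1, pt i3 f2, pt i1 f3}"

definition circ3 :: "'m::finite \<Rightarrow> 'm \<Rightarrow> 'm \<Rightarrow> 'n::finite \<Rightarrow> 'n \<Rightarrow> 'n \<Rightarrow>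
    ((real^'m) \<times> (real^'n)) set" where
  "circ3 i1 i2 i3 f1 f2 f3 = circ3_plus i1 i2 i3 f1 f2 f3 \<union> circ3_minus i1 i2 i3 f1 f2 f3"

end

theory Submission
  imports Defs
begin

text \<open>Suppose the flip exists. Then \<open>\<tau> = X\<^sub>i\<^sub>j\<^sub>k - {(e\<^sub>k, f\<^sub>k\<^sub>i)}\<close> is a simplex of \<open>T\<close>, and any
  simplex through \<tau> can be exchanged, keeping its part outside \<tau>, for one through \<open>X\<^sub>i\<^sub>j\<^sub>k\<close> minus
  another positive point, because all maximal cells of \<open>T\<^sub>X\<^sup>+\<close> have the same link.
  Two facts about triangulations drive the argument: a simplex through a face \<sigma> can be extended
  towards any point of \<open>A\<close> (start at the barycentre of \<sigma> and move slightly towards the point; only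
  simplices containing \<sigma> are met), and two simplices never carry the two halves of a circuit of
  length four or six. Applying the first with the linear functionals that are positive exactly on
  a block of vertices, we grow a simplex through \<tau> by \<open>(e\<^sub>k, f\<^sub>k\<^sub>l)\<close>, \<open>(e\<^sub>i, f\<^sub>i\<^sub>l)\<close>, \<open>(e\<^sub>l, f\<^sub>i\<^sub>j)\<close>,
  \<open>(e\<^sub>i, f\<^sub>j\<^sub>l)\<close>, each alternative being excluded by the second against the given simplices or an
  exchanged one. Exchanging the result at \<open>(e\<^sub>i, f\<^sub>i\<^sub>j)\<close> yields a simplex that cannot be extended
  towards \<open>(e\<^sub>l, f\<^sub>i\<^sub>l)\<close>.\<close>

lemma affine_independent_level_functional:
  fixes C :: "'a::euclidean_space set"
  assumes indep: "\<not> affine_dependent C" and GC: "G \<subseteq> C" and "G \<noteq> {}"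
  obtains u c where "\<And>x. x \<in> C \<Longrightarrow> u \<bullet> x = c + (if x \<in> G then 0 else 1)"
proof -
  obtain a where aG: "a \<in> G" using \<open>G \<noteq> {}\<close> by blast
  then have aC: "a \<in> C" using GC by blast
  have "\<not> dependent ((\<lambda>x. x - a) ` (C - {a}))"
    using indep affine_dependent_iff_dependent[of a "C - {a}"] by (simp add: insert_absorb[OF aC])
  then obtain g where g: "linear g"
    "\<forall>y \<in> (\<lambda>x. x - a) ` (C - {a}). g y = (if y + a \<in> G then 0 else 1 :: real)"
    using linear_independent_extend[of _ "\<lambda>y. if y + a \<in> G then 0 else 1"] by blast
  define u where "u = adjoint g 1"
  have u: "u \<bullet> (x - a) = (if x \<in> G then 0 else 1)" if "x \<in> C - {a}" for x
    using adjoint_works[OF g(1), of "x - a" 1] g(2) that by (simp add: u_def inner_commute)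
  show ?thesis
  proof (rule that[of u "u \<bullet> a"])
    fix x assume "x \<in> C"
    then show "u \<bullet> x = u \<bullet> a + (if x \<in> G then 0 else 1)"
      using u[of x] aG by (cases "x = a") (auto simp: inner_diff_right)
  qed
qed

lemma subset_is_face:
  fixes C :: "'a::euclidean_space set"
  assumes "\<not> affine_dependent C" and "G \<subseteq> C"
  shows "is_face G C"
proof (cases "G = {}")
  case False
  then obtain u c where u: "\<And>x. x \<in> C \<Longrightarrow> u \<bullet> x = c + (if x \<in> G then 0 else 1)"
    using affine_independent_level_functional[OF assms] by blast
  from False obtain a where "a \<in> G" by blast
  have "G = {x \<in> C. \<forall>y \<in> C. u \<bullet> x \<le> u \<bullet> y}"
  proof (intro set_eqI iffI)
    fix x assume "x \<in> G"
    then show "x \<in> {x \<in> C. \<forall>y \<in> C. u \<bullet> x \<le> u \<bullet> y}"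
      using assms(2) by (auto simp: u)
  next
    fix x assume x: "x \<in> {x \<in> C. \<forall>y \<in> C. u \<bullet> x \<le> u \<bullet> y}"
    then have "u \<bullet> x \<le> u \<bullet> a" using \<open>a \<in> G\<close> assms(2) by blast
    with x show "x \<in> G"
      using \<open>a \<in> G\<close> assms(2) by (auto simp: u split: if_splits)
  qed
  then show ?thesis
    using assms(2) unfolding is_face_def by blast
qed (simp add: is_face_def)

definition barycentre :: "'a::real_vector set \<Rightarrow> 'a" where
  "barycentre Z = (1 / real (card Z)) *\<^sub>R (\<Sum>x\<in>Z. x)"

lemma barycentre_in_convex_hull:
  assumes "finite Z" and "Z \<noteq> {}"
  shows "barycentre Z \<in> convex hull Z"
proof -
  have "(\<Sum>x\<in>Z. (1 / real (card Z)) *\<^sub>R x) \<in> convex hull Z"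
    using assms by (intro convex_sum) (auto simp: hull_inc card_gt_0_iff)
  then show ?thesis
    by (simp add: barycentre_def scaleR_sum_right)
qed

lemma barycentre_in_convex_hull_subset:
  fixes S :: "'a::euclidean_space set"
  assumes indep: "\<not> affine_dependent S" and GS: "G \<subseteq> S"
    and bary: "barycentre S \<in> convex hull G"
  shows "G = S"
proof -
  have "G \<noteq> {}" using bary by auto
  then obtain u c where u: "\<And>x. x \<in> S \<Longrightarrow> u \<bullet> x = c + (if x \<in> G then 0 else 1)"
    using affine_independent_level_functional[OF indep GS] by blast
  have fin: "finite S" using indep aff_independent_finite by blast
  have card_pos: "card S > 0" using fin GS \<open>G \<noteq> {}\<close> card_gt_0_iff by blast
  have "convex hull G \<subseteq> {x. u \<bullet> x = c}"
    using GS by (intro hull_minimal convex_hyperplane) (auto simp: u)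
  then have "u \<bullet> barycentre S = c" using bary by blast
  moreover have "(\<Sum>x\<in>S. u \<bullet> x) = real (card S) * c + real (card (S - G))"
  proof -
    have "(\<Sum>x\<in>S. u \<bullet> x) = (\<Sum>x\<in>S. c + (if x \<in> G then 0 else 1))"
      by (rule sum.cong) (simp_all add: u)
    also have "\<dots> = real (card S) * c + real (card (S - G))"
      using fin by (simp add: sum.distrib sum.If_cases Diff_eq)
    finally show ?thesis .
  qed
  moreover have "u \<bullet> barycentre S = (\<Sum>x\<in>S. u \<bullet> x) / real (card S)"
    by (simp add: barycentre_def inner_sum_right)
  ultimately have "real (card S) * c = real (card S) * c + real (card (S - G))"
    using card_pos by (simp add: divide_eq_eq mult.commute)
  then have "card (S - G) = 0" by simp
  then show ?thesis using fin GS by auto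
qed

lemma triangulation_simplex:
  assumes "is_triangulation A T" and "\<sigma> \<in> T"
  shows "\<sigma> \<subseteq> A" and "\<not> affine_dependent \<sigma>"
  using assms by (simp_all add: is_triangulation_def is_simplex_def)

lemma triangulation_subset_closed:
  assumes tri: "is_triangulation A T" and "\<rho> \<in> T" and "\<sigma> \<subseteq> \<rho>"
  shows "\<sigma> \<in> T"
proof -
  have "is_face \<sigma> \<rho>"
    using subset_is_face triangulation_simplex(2)[OF tri \<open>\<rho> \<in> T\<close>] \<open>\<sigma> \<subseteq> \<rho>\<close> by blast
  with tri \<open>\<rho> \<in> T\<close> show ?thesis
    by (simp add: is_triangulation_def)
qed

lemma triangulation_hull_Int:
  assumes "is_triangulation A T" and "\<rho>1 \<in> T" and "\<rho>2 \<in> T"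
  obtains F where "F \<subseteq> \<rho>1" "F \<subseteq> \<rho>2" "convex hull \<rho>1 \<inter> convex hull \<rho>2 = convex hull F"
proof -
  have "\<exists>F. is_face F \<rho>1 \<and> is_face F \<rho>2 \<and> convex hull \<rho>1 \<inter> convex hull \<rho>2 = convex hull F"
    using assms by (simp add: is_triangulation_def)
  then obtain F where "is_face F \<rho>1" "is_face F \<rho>2"
      "convex hull \<rho>1 \<inter> convex hull \<rho>2 = convex hull F"
    by blast
  then show ?thesis
    using that unfolding is_face_def by blast
qed

lemma triangulation_disjoint_hulls:
  fixes A :: "'a::euclidean_space set"
  assumes tri: "is_triangulation A T" and "\<rho>1 \<in> T" "\<rho>2 \<in> T"
    and Z1: "Z1 \<subseteq> \<rho>1" and Z2: "Z2 \<subseteq> \<rho>2" and disj: "Z1 \<inter> Z2 = {}"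
  shows "convex hull Z1 \<inter> convex hull Z2 = {}"
proof -
  obtain F where F: "F \<subseteq> \<rho>1" "F \<subseteq> \<rho>2" "convex hull \<rho>1 \<inter> convex hull \<rho>2 = convex hull F"
    using triangulation_hull_Int[OF assms(1-3)] .
  have indep1: "\<not> affine_dependent \<rho>1" and indep2: "\<not> affine_dependent \<rho>2"
    using triangulation_simplex(2)[OF tri] assms(2,3) by auto
  have "convex hull Z1 \<inter> convex hull Z2 \<subseteq> convex hull F"
    using F(3) hull_mono[OF Z1] hull_mono[OF Z2] by blast
  then have "convex hull Z1 \<inter> convex hull Z2 \<subseteq> convex hull (Z1 \<inter> F) \<inter> convex hull (Z2 \<inter> F)"
    using convex_hull_Int[of Z1 F] convex_hull_Int[of Z2 F] Z1 Z2 F(1,2)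
      affine_independent_subset[OF indep1, of "Z1 \<union> F"]
      affine_independent_subset[OF indep2, of "Z2 \<union> F"]
    by auto
  also have "\<dots> = convex hull (Z1 \<inter> F \<inter> (Z2 \<inter> F))"
    using convex_hull_Int[of "Z1 \<inter> F" "Z2 \<inter> F"] F(1)
      affine_independent_subset[OF indep1, of "(Z1 \<inter> F) \<union> (Z2 \<inter> F)"]
    by auto
  also have "\<dots> = {}" using disj by auto
  finally show ?thesis by blast
qed

lemma triangulation_barycentre_in_hull_imp_subset:
  fixes A :: "'a::euclidean_space set"
  assumes tri: "is_triangulation A T" and "\<rho>0 \<in> T" "\<rho> \<in> T" and "\<sigma> \<subseteq> \<rho>0"
    and "barycentre \<sigma> \<in> convex hull \<rho>"
  shows "\<sigma> \<subseteq> \<rho>"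
proof -
  obtain F where F: "F \<subseteq> \<rho>0" "F \<subseteq> \<rho>" "convex hull \<rho>0 \<inter> convex hull \<rho> = convex hull F"
    using triangulation_hull_Int[OF assms(1-3)] .
  have indep: "\<not> affine_dependent \<rho>0" using triangulation_simplex(2)[OF tri] assms(2) by auto
  then have indep_\<sigma>: "\<not> affine_dependent \<sigma>" using affine_independent_subset assms(4) by blast
  show ?thesis
  proof (cases "\<sigma> = {}")
    case False
    then have "barycentre \<sigma> \<in> convex hull \<sigma>"
      using barycentre_in_convex_hull aff_independent_finite[OF indep_\<sigma>] by blast
    then have "barycentre \<sigma> \<in> convex hull \<sigma> \<inter> convex hull F"
      using F(3) hull_mono[OF assms(4)] assms(5) by blast
    also have "\<dots> = convex hull (\<sigma> \<inter> F)"
      using convex_hull_Int[of \<sigma> F] affine_independent_subset[OF indep, of "\<sigma> \<union> F"] assms(4) F(1) by auto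
    finally have "\<sigma> \<inter> F = \<sigma>"
      using barycentre_in_convex_hull_subset[OF indep_\<sigma>] by blast
    then show ?thesis using F(2) by blast
  qed simp
qed

text \<open>Points just beyond the barycentre of \<sigma> towards \<open>a\<close> avoid the closed union of the simplices
  not containing \<sigma>.\<close>
lemma triangulation_extend_towards:
  fixes A :: "'a::euclidean_space set"
  assumes tri: "is_triangulation A T" and "finite A"
    and \<rho>0: "\<rho>0 \<in> T" and \<sigma>: "\<sigma> \<subseteq> \<rho>0" "\<sigma> \<noteq> {}"
    and "a \<in> A" and "\<And>x. x \<in> \<sigma> \<Longrightarrow> u \<bullet> x = 0" and "u \<bullet> a > 0"
  obtains \<rho> x where "\<rho> \<in> T" "\<sigma> \<subseteq> \<rho>" "x \<in> \<rho>" "u \<bullet> x > 0"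
proof -
  define q where "q = barycentre \<sigma>"
  have "finite \<sigma>"
    using \<sigma>(1) aff_independent_finite[OF triangulation_simplex(2)[OF tri \<rho>0]] finite_subset by blast
  then have q_hull: "q \<in> convex hull \<sigma>"
    unfolding q_def using barycentre_in_convex_hull \<sigma>(2) by blast
  have "u \<bullet> q = 0"
    using assms(7) by (simp add: q_def barycentre_def inner_sum_right)
  define B where "B = (\<Union>\<rho>\<in>{\<rho>\<in>T. \<not> \<sigma> \<subseteq> \<rho>}. convex hull \<rho>)"
  have "finite T"
    using finite_subset[of T "Pow A"] triangulation_simplex(1)[OF tri] \<open>finite A\<close> by blast
  moreover have "closed (convex hull \<rho>)" if "\<rho> \<in> T" for \<rho>
    using aff_independent_finite[OF triangulation_simplex(2)[OF tri that]]
    by (simp add: compact_imp_closed finite_imp_compact_convex_hull)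
  ultimately have "open (- B)"
    unfolding B_def by (intro open_Compl closed_UN) auto
  moreover have "q \<notin> B"
    using triangulation_barycentre_in_hull_imp_subset[OF tri \<rho>0 _ \<sigma>(1)] unfolding B_def q_def by blast
  moreover have "((\<lambda>t. q + t *\<^sub>R (a - q)) \<longlongrightarrow> q + 0 *\<^sub>R (a - q)) (at_right 0)"
    by (intro tendsto_intros)
  ultimately have "\<forall>\<^sub>F t in at_right 0. q + t *\<^sub>R (a - q) \<in> - B"
    using topological_tendstoD by fastforce
  moreover have "\<forall>\<^sub>F t in at_right 0. t \<in> {0<..<(1::real)}"
    by (rule eventually_at_right_real) simp
  ultimately have "\<forall>\<^sub>F t in at_right 0. q + t *\<^sub>R (a - q) \<in> - B \<and> t \<in> {0<..<1}"
    by (rule eventually_conj)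
  then obtain t where t: "0 < t" "t < 1" "q + t *\<^sub>R (a - q) \<notin> B"
    using eventually_happens'[OF trivial_limit_at_right_real] by auto
  define y where "y = q + t *\<^sub>R (a - q)"
  have "y = (1 - t) *\<^sub>R q + t *\<^sub>R a" by (simp add: y_def algebra_simps)
  moreover have "q \<in> convex hull A"
    using q_hull hull_mono[OF order.trans[OF \<sigma>(1) triangulation_simplex(1)[OF tri \<rho>0]]] by blast
  moreover have "a \<in> convex hull A" using \<open>a \<in> A\<close> by (rule hull_inc)
  ultimately have "y \<in> convex hull A"
    using convexD[OF convex_convex_hull, of q A a "1 - t" t] t by simp
  then obtain \<rho> where \<rho>: "\<rho> \<in> T" "y \<in> convex hull \<rho>"
    using tri unfolding is_triangulation_def by blast
  have "\<sigma> \<subseteq> \<rho>" using \<rho> t(3) unfolding B_def y_def by blast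
  have "u \<bullet> y > 0"
    using \<open>u \<bullet> q = 0\<close> \<open>u \<bullet> a > 0\<close> t(1) by (simp add: y_def inner_add_right inner_diff_right)
  moreover have "convex hull \<rho> \<subseteq> {x. u \<bullet> x \<le> 0}" if "\<rho> \<subseteq> {x. u \<bullet> x \<le> 0}"
    using that by (rule hull_minimal) (rule convex_halfspace_le)
  ultimately obtain x where "x \<in> \<rho>" "u \<bullet> x > 0" using \<rho>(2) by force
  then show ?thesis using that \<rho>(1) \<open>\<sigma> \<subseteq> \<rho>\<close> by blast
qed

lemma T_plus_delete:
  assumes "p \<in> Xp"
  shows "(Xp \<union> Xm) - {p} \<in> T_plus Xp Xm"
  using assms by (auto simp: T_plus_def)

lemma T_plus_delete_maximal:
  assumes "p \<in> Xp" and "\<tau> \<in> T_plus Xp Xm" and "(Xp \<union> Xm) - {p} \<subseteq> \<tau>"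
  shows "\<tau> = (Xp \<union> Xm) - {p}"
  using assms by (auto simp: T_plus_def)

text \<open>The part of \<rho> outside \<open>X - {p}\<close> lies in the link of \<open>X - {p}\<close>, which is the link of \<open>X - {p'}\<close>.\<close>
lemma has_flip_exchange:
  assumes tri: "is_triangulation A T" and flip: "has_flip T Xp Xm"
    and p: "p \<in> Xp" and p': "p' \<in> Xp" and "\<rho> \<in> T" and sub: "(Xp \<union> Xm) - {p} \<subseteq> \<rho>"
  shows "((Xp \<union> Xm) - {p'}) \<union> (\<rho> - ((Xp \<union> Xm) - {p})) \<in> T"
proof -
  obtain L where L: "\<forall>\<sigma> \<in> T_plus Xp Xm. (\<forall>\<tau> \<in> T_plus Xp Xm. \<sigma> \<subseteq> \<tau> \<longrightarrow> \<tau> = \<sigma>) \<longrightarrow> link T \<sigma> = L"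
    using flip unfolding has_flip_def by blast
  have link_eq: "link T ((Xp \<union> Xm) - {q}) = L" if "q \<in> Xp" for q
  proof -
    have "\<forall>\<tau> \<in> T_plus Xp Xm. (Xp \<union> Xm) - {q} \<subseteq> \<tau> \<longrightarrow> \<tau> = (Xp \<union> Xm) - {q}"
      using T_plus_delete_maximal[OF that] by blast
    then show ?thesis using L T_plus_delete[OF that] by blast
  qed
  define C where "C = \<rho> - ((Xp \<union> Xm) - {p})"
  have "C \<in> T"
    using triangulation_subset_closed[OF tri \<open>\<rho> \<in> T\<close>] unfolding C_def by blast
  moreover have "((Xp \<union> Xm) - {p}) \<union> C = \<rho>" "((Xp \<union> Xm) - {p}) \<inter> C = {}"
    using sub unfolding C_def by blast+
  ultimately have "C \<in> link T ((Xp \<union> Xm) - {p})"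
    unfolding link_def using \<open>\<rho> \<in> T\<close> by simp
  then have "C \<in> link T ((Xp \<union> Xm) - {p'})"
    using link_eq[OF p] link_eq[OF p'] by simp
  then show ?thesis unfolding link_def C_def by (simp add: Un_commute)
qed

lemma triangulation_no_split_balanced:
  fixes A :: "'a::euclidean_space set"
  assumes tri: "is_triangulation A T" and "\<rho>1 \<in> T" "\<rho>2 \<in> T"
    and Z: "Z1 \<subseteq> \<rho>1" "Z2 \<subseteq> \<rho>2" "Z1 \<inter> Z2 = {}" "Z1 \<noteq> {}"
    and "card Z1 = card Z2" and "(\<Sum>x\<in>Z1. x) = (\<Sum>x\<in>Z2. x)"
  shows False
proof -
  have "finite Z1"
    using Z(1) aff_independent_finite[OF triangulation_simplex(2)[OF tri \<open>\<rho>1 \<in> T\<close>]] finite_subset by blast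
  then have "card Z2 > 0"
    using Z(4) \<open>card Z1 = card Z2\<close> card_gt_0_iff[of Z1] by simp
  then have "finite Z2" "Z2 \<noteq> {}"
    using card_gt_0_iff[of Z2] by simp_all
  have "barycentre Z1 = barycentre Z2"
    using assms(8,9) by (simp add: barycentre_def)
  moreover have "barycentre Z1 \<in> convex hull Z1"
    using \<open>finite Z1\<close> Z(4) by (rule barycentre_in_convex_hull)
  moreover have "barycentre Z2 \<in> convex hull Z2"
    using \<open>finite Z2\<close> \<open>Z2 \<noteq> {}\<close> by (rule barycentre_in_convex_hull)
  ultimately show False
    using triangulation_disjoint_hulls[OF tri assms(2,3) Z(1-3)] by (metis IntI empty_iff)
qed

lemma pt_eq_iff [simp]: "pt a b = pt c d \<longleftrightarrow> a = c \<and> b = d"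
  by (simp add: pt_def axis_eq_axis)

lemma finite_prod_simplices: "finite (prod_simplices :: ((real^'m::finite) \<times> (real^'n::finite)) set)"
proof -
  have "prod_simplices = (\<lambda>(a, b). pt a b) ` (UNIV :: ('m \<times> 'n) set)"
    unfolding prod_simplices_def by (auto simp: image_iff)
  moreover have "finite ((\<lambda>(a, b). pt a b) ` (UNIV :: ('m \<times> 'n) set))"
    by (rule finite_imageI) simp
  ultimately show ?thesis by simp
qed

lemma triangulation_no_split_square:
  assumes tri: "is_triangulation A T" and "\<rho>1 \<in> T" "\<rho>2 \<in> T" and "a1 \<noteq> a2" "b1 \<noteq> b2"
    and "pt a1 b1 \<in> \<rho>1" "pt a2 b2 \<in> \<rho>1" and "pt a1 b2 \<in> \<rho>2" "pt a2 b1 \<in> \<rho>2"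
  shows False
proof (rule triangulation_no_split_balanced[OF tri assms(2,3),
    of "{pt a1 b1, pt a2 b2}" "{pt a1 b2, pt a2 b1}"])
  have "(\<Sum>x\<in>{pt a1 b1, pt a2 b2}. x) = pt a1 b1 + pt a2 b2" using assms(4) by simp
  also have "\<dots> = pt a1 b2 + pt a2 b1" by (simp add: pt_def)
  also have "\<dots> = (\<Sum>x\<in>{pt a1 b2, pt a2 b1}. x)" using assms(4) by simp
  finally show "(\<Sum>x\<in>{pt a1 b1, pt a2 b2}. x) = (\<Sum>x\<in>{pt a1 b2, pt a2 b1}. x)" .
qed (use assms in auto)

lemma triangulation_no_split_hexagon:
  assumes tri: "is_triangulation A T" and "\<rho>1 \<in> T" "\<rho>2 \<in> T"
    and "distinct [a1, a2, a3]" "distinct [b1, b2, b3]"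
    and "pt a1 b1 \<in> \<rho>1" "pt a2 b2 \<in> \<rho>1" "pt a3 b3 \<in> \<rho>1"
    and "pt a2 b1 \<in> \<rho>2" "pt a3 b2 \<in> \<rho>2" "pt a1 b3 \<in> \<rho>2"
  shows False
proof (rule triangulation_no_split_balanced[OF tri assms(2,3),
    of "{pt a1 b1, pt a2 b2, pt a3 b3}" "{pt a2 b1, pt a3 b2, pt a1 b3}"])
  have "(\<Sum>x\<in>{pt a1 b1, pt a2 b2, pt a3 b3}. x) = pt a1 b1 + pt a2 b2 + pt a3 b3"
    using assms(4,5) by (simp add: add.assoc)
  also have "\<dots> = pt a2 b1 + pt a3 b2 + pt a1 b3" by (simp add: pt_def algebra_simps)
  also have "\<dots> = (\<Sum>x\<in>{pt a2 b1, pt a3 b2, pt a1 b3}. x)"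
    using assms(4,5) by (simp add: add.assoc)
  finally show "(\<Sum>x\<in>{pt a1 b1, pt a2 b2, pt a3 b3}. x) = (\<Sum>x\<in>{pt a2 b1, pt a3 b2, pt a1 b3}. x)"
    .
qed (use assms in auto)

definition block_functional :: "'m::finite set \<Rightarrow> 'n::finite set \<Rightarrow> (real^'m) \<times> (real^'n)" where
  "block_functional R C = ((\<chi> a. if a \<in> R then 1 else 0), (\<chi> b. if b \<in> C then 0 else -1))"

lemma inner_block_functional_pt:
  "block_functional R C \<bullet> pt a b = (if a \<in> R then 1 else 0) - (if b \<in> C then 0 else 1)"
  by (simp add: block_functional_def pt_def inner_axis)

lemma triangulation_extend_into_block:
  fixes A :: "((real^'m::finite) \<times> (real^'n::finite)) set"
  assumes "A \<subseteq> prod_simplices" and tri: "is_triangulation A T"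
    and "\<rho>0 \<in> T" "\<sigma> \<subseteq> \<rho>0" "\<sigma> \<noteq> {}"
    and \<sigma>_off_block: "\<And>a b. pt a b \<in> \<sigma> \<Longrightarrow> a \<in> R \<longleftrightarrow> b \<notin> C"
    and "pt a0 b0 \<in> A" "a0 \<in> R" "b0 \<in> C"
  obtains \<rho> a b where "\<rho> \<in> T" "\<sigma> \<subseteq> \<rho>" "pt a b \<in> \<rho>" "a \<in> R" "b \<in> C"
proof -
  have A_pts: "\<exists>a b. x = pt a b" if "x \<in> A" for x
    using that \<open>A \<subseteq> prod_simplices\<close> unfolding prod_simplices_def by blast
  have "finite A"
    using finite_subset[OF \<open>A \<subseteq> prod_simplices\<close> finite_prod_simplices] .
  moreover have "block_functional R C \<bullet> x = 0" if "x \<in> \<sigma>" for x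
    using that A_pts[of x] \<sigma>_off_block triangulation_simplex(1)[OF tri \<open>\<rho>0 \<in> T\<close>] \<open>\<sigma> \<subseteq> \<rho>0\<close>
    by (force simp: inner_block_functional_pt)
  moreover have "block_functional R C \<bullet> pt a0 b0 > 0"
    using \<open>a0 \<in> R\<close> \<open>b0 \<in> C\<close> by (simp add: inner_block_functional_pt)
  ultimately obtain \<rho> x where "\<rho> \<in> T" "\<sigma> \<subseteq> \<rho>" "x \<in> \<rho>" "block_functional R C \<bullet> x > 0"
    using triangulation_extend_towards[OF tri _ assms(3-5,7)] by blast
  moreover obtain a b where "x = pt a b"
    using A_pts triangulation_simplex(1)[OF tri \<open>\<rho> \<in> T\<close>] \<open>x \<in> \<rho>\<close> by blast
  ultimately show ?thesis
    using that by (auto simp: inner_block_functional_pt split: if_splits)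
qed

locale tetrahedron_config =
  fixes A :: "((real^'m::finite) \<times> (real^'n::finite)) set"
    and T :: "((real^'m) \<times> (real^'n)) set set"
    and i j k l :: 'm
    and fij fik fil fjk fjl fkl :: 'n
  assumes A_sub: "A \<subseteq> prod_simplices"
    and tri: "is_triangulation A T"
    and rows: "distinct [i, j, k, l]"
    and cols: "distinct [fij, fik, fil, fjk, fjl, fkl]"
    and jkl_in_A: "circ3 j k l fjk fkl fjl \<subseteq> A"
    and kil_in_A: "circ3 k i l fik fil fkl \<subseteq> A"
    and T_plus_jkl: "T_plus (circ3_plus j k l fjk fkl fjl) (circ3_minus j k l fjk fkl fjl) \<subseteq> T"
    and T_plus_kil: "T_plus (circ3_plus k i l fik fil fkl) (circ3_minus k i l fik fil fkl) \<subseteq> T"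
    and ijl_face: "circ3 i j l fij fjl fil - {pt i fij} \<in> T"
begin

lemma distinct_rows: "i \<noteq> j" "i \<noteq> k" "i \<noteq> l" "j \<noteq> k" "j \<noteq> l" "k \<noteq> l"
  using rows by auto

lemma distinct_cols:
  "fij \<noteq> fik" "fij \<noteq> fil" "fij \<noteq> fjk" "fij \<noteq> fjl" "fij \<noteq> fkl"
  "fik \<noteq> fil" "fik \<noteq> fjk" "fik \<noteq> fjl" "fik \<noteq> fkl" "fil \<noteq> fjk" "fil \<noteq> fjl" "fil \<noteq> fkl"
  "fjk \<noteq> fjl" "fjk \<noteq> fkl" "fjl \<noteq> fkl"
  using cols by auto

lemmas distinct_labels = distinct_rows distinct_rows[symmetric] distinct_cols distinct_cols[symmetric]

lemma points_in_A: "pt k fkl \<in> A" "pt j fjl \<in> A" "pt i fil \<in> A" "pt l fil \<in> A"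
  using jkl_in_A kil_in_A by (auto simp: circ3_def circ3_plus_def circ3_minus_def)

lemma kil_without_l_fkl: "{pt i fik, pt i fil, pt k fik, pt k fkl, pt l fil} \<in> T"
proof -
  have "{pt i fik, pt i fil, pt k fik, pt k fkl, pt l fil}
      \<in> T_plus (circ3_plus k i l fik fil fkl) (circ3_minus k i l fik fil fkl)"
    using distinct_labels by (auto simp: T_plus_def circ3_plus_def circ3_minus_def)
  then show ?thesis using T_plus_kil by blast
qed

lemma jkl_without_l_fjl: "{pt j fjk, pt j fjl, pt k fjk, pt k fkl, pt l fkl} \<in> T"
proof -
  have "{pt j fjk, pt j fjl, pt k fjk, pt k fkl, pt l fkl}
      \<in> T_plus (circ3_plus j k l fjk fkl fjl) (circ3_minus j k l fjk fkl fjl)"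
    using distinct_labels by (auto simp: T_plus_def circ3_plus_def circ3_minus_def)
  then show ?thesis using T_plus_jkl by blast
qed

lemma jkl_without_j_fjk: "{pt j fjl, pt k fjk, pt k fkl, pt l fjl, pt l fkl} \<in> T"
proof -
  have "{pt j fjl, pt k fjk, pt k fkl, pt l fjl, pt l fkl}
      \<in> T_plus (circ3_plus j k l fjk fkl fjl) (circ3_minus j k l fjk fkl fjl)"
    using distinct_labels by (auto simp: T_plus_def circ3_plus_def circ3_minus_def)
  then show ?thesis using T_plus_jkl by blast
qed

lemma ijl_without_i_fij: "{pt i fil, pt j fij, pt j fjl, pt l fil, pt l fjl} \<in> T"
proof -
  have "circ3 i j l fij fjl fil - {pt i fij} = {pt i fil, pt j fij, pt j fjl, pt l fil, pt l fjl}"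
    using distinct_labels by (auto simp: circ3_def circ3_plus_def circ3_minus_def)
  then show ?thesis using ijl_face by simp
qed

text \<open>\<tau> is \<open>X\<^sub>i\<^sub>j\<^sub>k - {(e\<^sub>k, f\<^sub>k\<^sub>i)}\<close> (see \<open>ijk_without_k_fik\<close>).\<close>
definition \<tau> :: "((real^'m) \<times> (real^'n)) set" where
  "\<tau> = {pt i fij, pt i fik, pt j fij, pt j fjk, pt k fjk}"

lemma extend_by_k_fkl:
  assumes "\<rho>0 \<in> T" "\<tau> \<subseteq> \<rho>0"
  obtains \<rho> where "\<rho> \<in> T" "\<tau> \<subseteq> \<rho>" "pt k fkl \<in> \<rho> \<or> pt i fkl \<in> \<rho>"
proof -
  have \<sigma>: "\<tau> \<noteq> {}" "\<And>a b. pt a b \<in> \<tau> \<Longrightarrow> a \<in> {i, j, k} \<longleftrightarrow> b \<notin> {fkl}"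
    using distinct_cols by (auto simp: \<tau>_def)
  obtain \<rho> a b where \<rho>: "\<rho> \<in> T" "\<tau> \<subseteq> \<rho>" "pt a b \<in> \<rho>" "a \<in> {i, j, k}" "b \<in> {fkl}"
    by (rule triangulation_extend_into_block[OF A_sub tri assms \<sigma> points_in_A(1)]) simp_all
  then consider "pt i fkl \<in> \<rho>" | "pt j fkl \<in> \<rho>" | "pt k fkl \<in> \<rho>" by blast
  then show ?thesis
  proof cases
    case 2
    have False
      by (rule triangulation_no_split_square[OF tri \<rho>(1) jkl_without_l_fjl, of j k fkl fjk])
        (use \<rho> 2 distinct_labels in \<open>auto simp: \<tau>_def\<close>)
    then show ?thesis ..
  qed (use that \<rho> in blast)+
qed

lemma extend_by_i_fil:
  assumes "\<rho>0 \<in> T" "insert (pt k fkl) \<tau> \<subseteq> \<rho>0"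
  obtains \<rho> where "\<rho> \<in> T" "insert (pt i fil) (insert (pt k fkl) \<tau>) \<subseteq> \<rho>"
proof -
  let ?\<sigma> = "insert (pt k fkl) \<tau>"
  have \<sigma>: "?\<sigma> \<noteq> {}" "\<And>a b. pt a b \<in> ?\<sigma> \<Longrightarrow> a \<in> {i, j, k} \<longleftrightarrow> b \<notin> {fil}"
    using distinct_cols by (auto simp: \<tau>_def)
  obtain \<rho> a b where \<rho>: "\<rho> \<in> T" "?\<sigma> \<subseteq> \<rho>" "pt a b \<in> \<rho>" "a \<in> {i, j, k}" "b \<in> {fil}"
    by (rule triangulation_extend_into_block[OF A_sub tri assms \<sigma> points_in_A(3)]) simp_all
  then consider "pt i fil \<in> \<rho>" | "pt j fil \<in> \<rho>" | "pt k fil \<in> \<rho>" by blast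
  then show ?thesis
  proof cases
    case 1
    then show ?thesis using that \<rho> by blast
  next
    case 2
    have False
      by (rule triangulation_no_split_square[OF tri \<rho>(1) ijl_without_i_fij, of j i fil fij])
        (use \<rho> 2 distinct_labels in \<open>auto simp: \<tau>_def\<close>)
    then show ?thesis ..
  next
    case 3
    have False
      by (rule triangulation_no_split_square[OF tri \<rho>(1) kil_without_l_fkl, of k i fil fik])
        (use \<rho> 3 distinct_labels in \<open>auto simp: \<tau>_def\<close>)
    then show ?thesis ..
  qed
qed

lemma no_simplex_with_l_fil:
  assumes "\<rho>0 \<in> T" "insert (pt l fil) (insert (pt i fil) (insert (pt k fkl) \<tau>)) \<subseteq> \<rho>0"
  shows False
proof -
  let ?\<sigma> = "insert (pt l fil) (insert (pt i fil) (insert (pt k fkl) \<tau>))"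
  have \<sigma>: "?\<sigma> \<noteq> {}" "\<And>a b. pt a b \<in> ?\<sigma> \<Longrightarrow> a \<in> {i, j, k, l} \<longleftrightarrow> b \<notin> {fjl}"
    using distinct_cols by (auto simp: \<tau>_def)
  obtain \<rho> a b where \<rho>: "\<rho> \<in> T" "?\<sigma> \<subseteq> \<rho>" "pt a b \<in> \<rho>" "a \<in> {i, j, k, l}" "b \<in> {fjl}"
    by (rule triangulation_extend_into_block[OF A_sub tri assms \<sigma> points_in_A(2)]) simp_all
  then consider "pt i fjl \<in> \<rho>" | "pt j fjl \<in> \<rho>" | "pt k fjl \<in> \<rho>" | "pt l fjl \<in> \<rho>" by blast
  then show False
  proof cases
    case 1
    show False
      by (rule triangulation_no_split_square[OF tri \<rho>(1) ijl_without_i_fij, of i l fjl fil])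
        (use \<rho> 1 distinct_labels in auto)
  next
    case 2
    show False
      by (rule triangulation_no_split_hexagon[OF tri \<rho>(1) ijl_without_i_fij, of j l i fjl fil fij])
        (use \<rho> 2 distinct_labels in \<open>auto simp: \<tau>_def\<close>)
  next
    case 3
    show False
      by (rule triangulation_no_split_square[OF tri \<rho>(1) jkl_without_j_fjk, of k j fjl fjk])
        (use \<rho> 3 distinct_labels in \<open>auto simp: \<tau>_def\<close>)
  next
    case 4
    show False
      by (rule triangulation_no_split_hexagon[OF tri \<rho>(1) jkl_without_j_fjk, of k l j fkl fjl fjk])
        (use \<rho> 4 distinct_labels in \<open>auto simp: \<tau>_def\<close>)
  qed
qed

lemma extend_by_l_fij:
  assumes "\<rho>0 \<in> T" "insert (pt i fil) (insert (pt k fkl) \<tau>) \<subseteq> \<rho>0"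
  obtains \<rho> where "\<rho> \<in> T" "insert (pt i fil) (insert (pt k fkl) \<tau>) \<subseteq> \<rho>"
    "pt l fij \<in> \<rho> \<or> pt l fkl \<in> \<rho>"
proof -
  let ?\<sigma> = "insert (pt i fil) (insert (pt k fkl) \<tau>)"
  let ?C = "{fij, fik, fil, fjk, fjl, fkl}"
  have \<sigma>: "?\<sigma> \<noteq> {}" "\<And>a b. pt a b \<in> ?\<sigma> \<Longrightarrow> a \<in> {l} \<longleftrightarrow> b \<notin> ?C"
    using distinct_rows by (auto simp: \<tau>_def)
  obtain \<rho> a b where \<rho>: "\<rho> \<in> T" "?\<sigma> \<subseteq> \<rho>" "pt a b \<in> \<rho>" "a \<in> {l}" "b \<in> ?C"
    by (rule triangulation_extend_into_block[OF A_sub tri assms \<sigma> points_in_A(4)]) simp_all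
  then consider "pt l fij \<in> \<rho>" | "pt l fik \<in> \<rho>" | "pt l fil \<in> \<rho>" | "pt l fjk \<in> \<rho>"
    | "pt l fjl \<in> \<rho>" | "pt l fkl \<in> \<rho>"
    by blast
  then show ?thesis
  proof cases
    case 2
    have False
      by (rule triangulation_no_split_square[OF tri \<rho>(1) kil_without_l_fkl, of l i fik fil])
        (use \<rho> 2 distinct_labels in auto)
    then show ?thesis ..
  next
    case 3
    then have False
      using no_simplex_with_l_fil[OF \<rho>(1)] \<rho>(2) by simp
    then show ?thesis ..
  next
    case 4
    have False
      by (rule triangulation_no_split_square[OF tri \<rho>(1) jkl_without_j_fjk, of l k fjk fkl])
        (use \<rho> 4 distinct_labels in auto)
    then show ?thesis ..
  next
    case 5
    have False
      by (rule triangulation_no_split_hexagon[OF tri \<rho>(1) jkl_without_j_fjk, of k l j fkl fjl fjk])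
        (use \<rho> 5 distinct_labels in \<open>auto simp: \<tau>_def\<close>)
    then show ?thesis ..
  qed (use that \<rho> in blast)+
qed

lemma extend_by_i_fjl:
  assumes "\<rho>0 \<in> T" "insert (pt l fij) (insert (pt i fil) (insert (pt k fkl) \<tau>)) \<subseteq> \<rho>0"
  obtains \<rho> where "\<rho> \<in> T"
    "insert (pt i fjl) (insert (pt l fij) (insert (pt i fil) (insert (pt k fkl) \<tau>))) \<subseteq> \<rho>"
proof -
  let ?\<sigma> = "insert (pt l fij) (insert (pt i fil) (insert (pt k fkl) \<tau>))"
  have \<sigma>: "?\<sigma> \<noteq> {}" "\<And>a b. pt a b \<in> ?\<sigma> \<Longrightarrow> a \<in> {i, j, k, l} \<longleftrightarrow> b \<notin> {fjl}"
    using distinct_cols by (auto simp: \<tau>_def)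
  obtain \<rho> a b where \<rho>: "\<rho> \<in> T" "?\<sigma> \<subseteq> \<rho>" "pt a b \<in> \<rho>" "a \<in> {i, j, k, l}" "b \<in> {fjl}"
    by (rule triangulation_extend_into_block[OF A_sub tri assms \<sigma> points_in_A(2)]) simp_all
  then consider "pt i fjl \<in> \<rho>" | "pt j fjl \<in> \<rho>" | "pt k fjl \<in> \<rho>" | "pt l fjl \<in> \<rho>" by blast
  then show ?thesis
  proof cases
    case 1
    then show ?thesis using that \<rho> by blast
  next
    case 2
    have False
      by (rule triangulation_no_split_square[OF tri \<rho>(1) ijl_without_i_fij, of j l fjl fij])
        (use \<rho> 2 distinct_labels in auto)
    then show ?thesis ..
  next
    case 3
    have False
      by (rule triangulation_no_split_square[OF tri \<rho>(1) jkl_without_j_fjk, of k j fjl fjk])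
        (use \<rho> 3 distinct_labels in \<open>auto simp: \<tau>_def\<close>)
    then show ?thesis ..
  next
    case 4
    have False
      by (rule triangulation_no_split_hexagon[OF tri \<rho>(1) jkl_without_j_fjk, of k l j fkl fjl fjk])
        (use \<rho> 4 distinct_labels in \<open>auto simp: \<tau>_def\<close>)
    then show ?thesis ..
  qed
qed

lemma no_simplex_with_exchanged_cell:
  assumes "\<rho>0 \<in> T"
    and "{pt i fik, pt i fil, pt i fjl, pt j fjk, pt k fik, pt k fjk, pt k fkl, pt l fij} \<subseteq> \<rho>0"
  shows False
proof -
  let ?\<sigma> = "{pt i fik, pt i fil, pt i fjl, pt j fjk, pt k fik, pt k fjk, pt k fkl, pt l fij}"
  let ?C = "{fik, fil, fjk, fjl, fkl}"
  have \<sigma>: "?\<sigma> \<noteq> {}" "\<And>a b. pt a b \<in> ?\<sigma> \<Longrightarrow> a \<in> {l} \<longleftrightarrow> b \<notin> ?C"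
    using distinct_rows distinct_cols by auto
  obtain \<rho> a b where \<rho>: "\<rho> \<in> T" "?\<sigma> \<subseteq> \<rho>" "pt a b \<in> \<rho>" "a \<in> {l}" "b \<in> ?C"
    by (rule triangulation_extend_into_block[OF A_sub tri assms \<sigma> points_in_A(4)]) simp_all
  then consider "pt l fik \<in> \<rho>" | "pt l fil \<in> \<rho>" | "pt l fjk \<in> \<rho>" | "pt l fjl \<in> \<rho>" | "pt l fkl \<in> \<rho>"
    by blast
  then show False
  proof cases
    case 1
    show False
      by (rule triangulation_no_split_square[OF tri \<rho>(1) kil_without_l_fkl, of l i fik fil])
        (use \<rho> 1 distinct_labels in auto)
  next
    case 2
    show False
      by (rule triangulation_no_split_square[OF tri \<rho>(1) ijl_without_i_fij, of l i fil fjl])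
        (use \<rho> 2 distinct_labels in auto)
  next
    case 3
    show False
      by (rule triangulation_no_split_square[OF tri \<rho>(1) jkl_without_j_fjk, of l k fjk fkl])
        (use \<rho> 3 distinct_labels in auto)
  next
    case 4
    show False
      by (rule triangulation_no_split_hexagon[OF tri \<rho>(1) jkl_without_j_fjk, of k l j fkl fjl fjk])
        (use \<rho> 4 distinct_labels in auto)
  next
    case 5
    show False
      by (rule triangulation_no_split_hexagon[OF tri \<rho>(1) kil_without_l_fkl, of i l k fil fkl fik])
        (use \<rho> 5 distinct_labels in auto)
  qed
qed

context
  assumes flip: "has_flip T (circ3_plus i j k fij fjk fik) (circ3_minus i j k fij fjk fik)"
begin

lemma ijk_without_k_fik: "circ3 i j k fij fjk fik - {pt k fik} = \<tau>"
  using distinct_labels by (auto simp: \<tau>_def circ3_def circ3_plus_def circ3_minus_def)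

lemma \<tau>_in_T: "\<tau> \<in> T"
  using flip T_plus_delete[of "pt k fik" "circ3_plus i j k fij fjk fik" "circ3_minus i j k fij fjk fik"]
    ijk_without_k_fik
  by (auto simp: has_flip_def circ3_def circ3_plus_def)

lemma flip_exchange:
  assumes "p \<in> circ3_plus i j k fij fjk fik" "\<rho> \<in> T" "\<tau> \<subseteq> \<rho>"
  shows "(circ3 i j k fij fjk fik - {p}) \<union> (\<rho> - \<tau>) \<in> T"
  using has_flip_exchange[OF tri flip _ assms(1,2), of "pt k fik"] ijk_without_k_fik assms(3)
  by (simp add: circ3_def circ3_plus_def)

lemma flip_contradiction: False
proof -
  obtain \<rho>1 where \<rho>1: "\<rho>1 \<in> T" "\<tau> \<subseteq> \<rho>1" "pt k fkl \<in> \<rho>1 \<or> pt i fkl \<in> \<rho>1"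
    using extend_by_k_fkl[OF \<tau>_in_T order.refl] .
  have "pt i fkl \<notin> \<rho>1"
  proof
    assume "pt i fkl \<in> \<rho>1"
    show False
      by (rule triangulation_no_split_square[OF tri flip_exchange[of "pt j fjk", OF _ \<rho>1(1,2)]
            kil_without_l_fkl, of i k fkl fik])
        (use \<open>pt i fkl \<in> \<rho>1\<close> distinct_labels in \<open>auto simp: \<tau>_def circ3_def circ3_plus_def circ3_minus_def\<close>)
  qed
  with \<rho>1 obtain \<rho>2 where \<rho>2: "\<rho>2 \<in> T" "insert (pt i fil) (insert (pt k fkl) \<tau>) \<subseteq> \<rho>2"
    using extend_by_i_fil[of \<rho>1] by auto
  then obtain \<rho>3 where \<rho>3: "\<rho>3 \<in> T" "insert (pt i fil) (insert (pt k fkl) \<tau>) \<subseteq> \<rho>3"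
      "pt l fij \<in> \<rho>3 \<or> pt l fkl \<in> \<rho>3"
    by (rule extend_by_l_fij)
  have "pt l fkl \<notin> \<rho>3"
  proof
    assume "pt l fkl \<in> \<rho>3"
    show False
      by (rule triangulation_no_split_hexagon[OF tri flip_exchange[of "pt i fij", OF _ \<rho>3(1)]
            kil_without_l_fkl, of i l k fil fkl fik])
        (use \<open>pt l fkl \<in> \<rho>3\<close> \<rho>3(2) distinct_labels in \<open>auto simp: \<tau>_def circ3_def circ3_plus_def circ3_minus_def\<close>)
  qed
  with \<rho>3 obtain \<rho>4 where \<rho>4: "\<rho>4 \<in> T"
      "insert (pt i fjl) (insert (pt l fij) (insert (pt i fil) (insert (pt k fkl) \<tau>))) \<subseteq> \<rho>4"
    using extend_by_i_fjl[of \<rho>3] by auto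
  show False
    by (rule no_simplex_with_exchanged_cell[OF flip_exchange[of "pt i fij", OF _ \<rho>4(1)]])
      (use \<rho>4(2) distinct_labels in \<open>auto simp: \<tau>_def circ3_def circ3_plus_def circ3_minus_def\<close>)
qed

end

lemma no_flip: "\<not> has_flip T (circ3_plus i j k fij fjk fik) (circ3_minus i j k fij fjk fik)"
  using flip_contradiction by blast

end

theorem proposition5p4:
  fixes A :: "((real^'m::finite) \<times> (real^'n::finite)) set"
    and T :: "((real^'m) \<times> (real^'n)) set set"
    and i j k l :: 'm
    and fij fik fil fjk fjl fkl :: 'n
  assumes "A \<subseteq> prod_simplices"
    and "is_triangulation A T"
    and "distinct [i, j, k, l]"
    and "distinct [fij, fik, fil, fjk, fjl, fkl]"
    and "circ3 j k l fjk fkl fjl \<subseteq> A"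
    and "circ3 k i l fik fil fkl \<subseteq> A"
    and "circ3 i j l fij fjl fil \<subseteq> A"
    and "circ3 i j k fij fjk fik \<subseteq> A"
    and "T_plus (circ3_plus j k l fjk fkl fjl) (circ3_minus j k l fjk fkl fjl) \<subseteq> T"
    and "T_plus (circ3_plus k i l fik fil fkl) (circ3_minus k i l fik fil fkl) \<subseteq> T"
    and "circ3 i j l fij fjl fil - {pt i fij} \<in> T"
  shows "\<not> has_flip T (circ3_plus i j k fij fjk fik) (circ3_minus i j k fij fjk fik)"
proof -
  interpret tetrahedron_config A T i j k l fij fik fil fjk fjl fkl
    using assms(1-6,9-11) by unfold_locales
  show ?thesis by (rule no_flip)
qed

end
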